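(* Let $\phi\in(\pi,2\pi)$ and $l>0$. For $r=l+\epsilon$ with $\epsilon>0$ sufficiently small, $$\sum_{k=3,4}\mathbf 1(C_k(\phi,l,r))\,g_k(\phi,l,r)=\mathbf 1(C_{34}(\phi,l,r))\,g_4(\phi,l,r).$$
   Context: Conditions: $C_3(\phi,l,r)$: $3\pi/2<\phi<2\pi$ and $l|\sin\phi|\le r$; $C_4(\phi,l,r)$: $\pi<\phi\le3\pi/2$ and $l\le r$; $C_{34}=C_3\cup C_4$; $\mathbf1$ is the indicator. With $\arcsin\in[-\pi/2,\pi/2]$, $[t]^+=\max(t,0)$, and all quantities evaluated at $(\phi,l,r)$: $\gamma=l\sin(2\pi-\phi)/r$, $\zeta_1=\phi-\pi-\arcsin\gamma$, $\zeta_2=\phi-\pi-(\pi-\arcsin\gamma)$, $g_{3,1}=-2\gamma^2+\frac{1}{\tan\phi}(2\arcsin\gamma-2\gamma\sqrt{1-\gamma^2})$, $g_{3,2}=\frac{1}{\tan\phi}(-2(-\arcsin\gamma-\phi+2\pi)-2\gamma\sqrt{1-\gamma^2}-\sin2\phi)-1+2\gamma^2+\cos2\phi$, $g_{3,3}=\frac{l^2\sin\phi}{2}(\zeta_1\cos\phi-\sin\phi(\log|\sin\phi|-\log\gamma))$, $g_{3,4}=\frac{l^2\sin\phi}{2}(\pi-2\arcsin\gamma)\cos\phi$, $g_3=lr(\cos([\zeta_2]^+)-\cos\zeta_1)-\frac{r^2}{8}g_{3,1}+(-\frac{r^2}{8}g_{3,2}+g_{3,4})\mathbf1(\zeta_2>0)+g_{3,3}\mathbf1(\zeta_2\le0)$,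 $g_4=lr(1-\cos\zeta_1)-\frac{r^2}{8}g_{3,1}+g_{3,3}$. *)

theory Defs
  imports Complex_Main
begin

definition C3 :: "real \<Rightarrow> real \<Rightarrow> real \<Rightarrow> bool" where
  "C3 \<phi> l r \<longleftrightarrow> 3*pi/2 < \<phi> \<and> \<phi> < 2*pi \<and> l * \<bar>sin \<phi>\<bar> \<le> r"

definition C4 :: "real \<Rightarrow> real \<Rightarrow> real \<Rightarrow> bool" where
  "C4 \<phi> l r \<longleftrightarrow> pi < \<phi> \<and> \<phi> \<le> 3*pi/2 \<and> l \<le> r"

definition C34 :: "real \<Rightarrow> real \<Rightarrow> real \<Rightarrow> bool" where
  "C34 \<phi> l r \<longleftrightarrow> C3 \<phi> l r \<or> C4 \<phi> l r"

definition pospart :: "real \<Rightarrow> real" where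
  "pospart t = max t 0"

definition gam :: "real \<Rightarrow> real \<Rightarrow> real \<Rightarrow> real" where
  "gam \<phi> l r = l * sin (2*pi - \<phi>) / r"

definition zeta1 :: "real \<Rightarrow> real \<Rightarrow> real \<Rightarrow> real" where
  "zeta1 \<phi> l r = \<phi> - pi - arcsin (gam \<phi> l r)"

definition zeta2 :: "real \<Rightarrow> real \<Rightarrow> real \<Rightarrow> real" where
  "zeta2 \<phi> l r = \<phi> - pi - (pi - arcsin (gam \<phi> l r))"

definition g31 :: "real \<Rightarrow> real \<Rightarrow> real \<Rightarrow> real" where
  "g31 \<phi> l r = (let \<gamma> = gam \<phi> l r in
     -2 * \<gamma>^2 + (1 / tan \<phi>) * (2 * arcsin \<gamma> - 2 * \<gamma> * sqrt (1 - \<gamma>^2)))"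

definition g32 :: "real \<Rightarrow> real \<Rightarrow> real \<Rightarrow> real" where
  "g32 \<phi> l r = (let \<gamma> = gam \<phi> l r in
     (1 / tan \<phi>) * (-2 * (- arcsin \<gamma> - \<phi> + 2*pi) - 2 * \<gamma> * sqrt (1 - \<gamma>^2) - sin (2*\<phi>))
     - 1 + 2 * \<gamma>^2 + cos (2*\<phi>))"

definition g33 :: "real \<Rightarrow> real \<Rightarrow> real \<Rightarrow> real" where
  "g33 \<phi> l r = l^2 * sin \<phi> / 2 *
     (zeta1 \<phi> l r * cos \<phi> - sin \<phi> * (ln \<bar>sin \<phi>\<bar> - ln (gam \<phi> l r)))"

definition g34 :: "real \<Rightarrow> real \<Rightarrow> real \<Rightarrow> real" where
  "g34 \<phi> l r = l^2 * sin \<phi> / 2 * (pi - 2 * arcsin (gam \<phi> l r)) * cos \<phi>"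

definition g3 :: "real \<Rightarrow> real \<Rightarrow> real \<Rightarrow> real" where
  "g3 \<phi> l r = l * r * (cos (pospart (zeta2 \<phi> l r)) - cos (zeta1 \<phi> l r))
     - r^2 / 8 * g31 \<phi> l r
     + (- (r^2 / 8 * g32 \<phi> l r) + g34 \<phi> l r) * of_bool (zeta2 \<phi> l r > 0)
     + g33 \<phi> l r * of_bool (zeta2 \<phi> l r \<le> 0)"

definition g4 :: "real \<Rightarrow> real \<Rightarrow> real \<Rightarrow> real" where
  "g4 \<phi> l r = l * r * (1 - cos (zeta1 \<phi> l r)) - r^2 / 8 * g31 \<phi> l r + g33 \<phi> l r"

end

theory Submission
  imports Defs
begin

text \<open>The identity holds for every \<open>r \<ge> l\<close>, not only for \<open>r\<close> close to \<open>l\<close>.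
  For \<open>\<phi> \<le> 3\<pi>/2\<close> only \<open>C\<^sub>4\<close> can hold. For \<open>\<phi> > 3\<pi>/2\<close> only \<open>C\<^sub>3\<close> can hold, and it does;
  moreover \<open>0 \<le> \<gamma> \<le> sin (2\<pi> - \<phi>)\<close> gives \<open>arcsin \<gamma> \<le> 2\<pi> - \<phi>\<close>, i.e. \<open>\<zeta>\<^sub>2 \<le> 0\<close>,
  and with \<open>\<zeta>\<^sub>2 \<le> 0\<close> the definition of \<open>g\<^sub>3\<close> collapses to that of \<open>g\<^sub>4\<close>.\<close>

lemma g3_eq_g4_if_zeta2_nonpos:
  assumes "zeta2 \<phi> l r \<le> 0"
  shows "g3 \<phi> l r = g4 \<phi> l r"
  using assms by (simp add: g3_def g4_def pospart_def)

lemma zeta2_nonpos: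
  fixes \<phi> l r :: real
  assumes "3*pi/2 < \<phi>" "\<phi> < 2*pi" "0 \<le> l" "l \<le> r"
  shows "zeta2 \<phi> l r \<le> 0"
proof -
  define t where "t = 2*pi - \<phi>"
  have t: "0 < t" "t < pi/2" using assms unfolding t_def by auto
  have sin_t: "0 < sin t" "sin t \<le> 1" using t by (auto intro: sin_gt_zero)
  have gam_eq: "gam \<phi> l r = l / r * sin t"
    unfolding gam_def t_def by simp
  have "l / r \<le> 1" "0 \<le> l / r"
    using assms by (auto simp: divide_le_eq)
  then have "0 \<le> gam \<phi> l r" "gam \<phi> l r \<le> sin t"
    unfolding gam_eq using sin_t by (simp_all add: mult_left_le_one_le del: times_divide_eq_left)
  then have "arcsin (gam \<phi> l r) \<le> arcsin (sin t)"
    using sin_t by (intro arcsin_le_arcsin) auto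
  also have "arcsin (sin t) = t" using t by (intro arcsin_sin) auto
  finally show ?thesis unfolding zeta2_def t_def by simp
qed

lemma C3_if_le:
  fixes \<phi> l r :: real
  assumes "3*pi/2 < \<phi>" "\<phi> < 2*pi" "0 \<le> l" "l \<le> r"
  shows "C3 \<phi> l r"
proof -
  have "l * \<bar>sin \<phi>\<bar> \<le> l" using assms by (simp add: mult_left_le abs_sin_le_one)
  with assms show ?thesis by (simp add: C3_def)
qed

lemma indicator_sum_C3_C4_eq_C34:
  fixes \<phi> l r :: real
  assumes "pi < \<phi>" "\<phi> < 2*pi" "0 \<le> l" "l \<le> r"
  shows "of_bool (C3 \<phi> l r) * g3 \<phi> l r + of_bool (C4 \<phi> l r) * g4 \<phi> l r
           = of_bool (C34 \<phi> l r) * g4 \<phi> l r"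
proof (cases "\<phi> \<le> 3*pi/2")
  case True
  then show ?thesis using assms by (simp add: C3_def C4_def C34_def)
next
  case False
  then have "C3 \<phi> l r" "g3 \<phi> l r = g4 \<phi> l r"
    using assms by (simp_all add: C3_if_le g3_eq_g4_if_zeta2_nonpos zeta2_nonpos)
  with False show ?thesis by (simp add: C4_def C34_def)
qed

theorem lemma2:
  fixes \<phi> l :: real
  assumes "pi < \<phi>" and "\<phi> < 2*pi" and "0 < l"
  shows "\<exists>\<epsilon>0>0. \<forall>\<epsilon>. 0 < \<epsilon> \<and> \<epsilon> < \<epsilon>0 \<longrightarrow>
           of_bool (C3 \<phi> l (l+\<epsilon>)) * g3 \<phi> l (l+\<epsilon>) + of_bool (C4 \<phi> l (l+\<epsilon>)) * g4 \<phi> l (l+\<epsilon>)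
           = of_bool (C34 \<phi> l (l+\<epsilon>)) * g4 \<phi> l (l+\<epsilon>)"
  using assms by (intro exI[of _ 1]) (simp add: indicator_sum_C3_C4_eq_C34)

end
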